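(* (i) If $K\subset\mathbb{R}^{N+1}_+$ is compact and $\mu\in\mathcal{M}_K$, then $\mathbb{P}^h_\mu(A^{-1}z)=\mathbb{P}^{\tilde h}_{A_\#\mu}(z)$ for all $z\in\mathbb{R}^{N+1}_-$, where $A_\#\mu\in\mathcal{M}_{AK}$ is the pushforward $(A_\#\mu)(E)=\mu(A^{-1}E)$. If $K\subset\mathbb{R}^{N+1}_-$ is compact and $\mu\in\mathcal{M}_K$, then $\mathbb{P}^{\tilde h}_\mu(Az)=\mathbb{P}^h_{(A^{-1})_\#\mu}(z)$ for all $z\in\mathbb{R}^{N+1}_+$, where $((A^{-1})_\#\mu)(E)=\mu(AE)$. (ii) $\lambda\in\mathcal{M}_K$ is the $h$-capacitary measure of a compact $K\subset\mathbb{R}^{N+1}_+$ if and only if $A_\#\lambda$ is the $\tilde h$-capacitary measure of $AK$. (iii) For compact $K\subset\mathbb{R}^{N+1}_+$ with $h$-capacitary measure $\lambda$, $C_{\tilde h}(AK)=\lambda(K)=C_h(K)$; for compact $K\subset\mathbb{R}^{N+1}_-$ with $\tilde h$-capacitary measure $\tilde\lambda$, $C_h(A^{-1}K)=\tilde\lambda(K)=C_{\tilde h}(K)$.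
   Context: Fix $\gamma\in\mathbb{R}^N$, $N\ge1$. $F(x,t)=(4\pi t)^{-N/2}e^{-|x|^2/(4t)}$ for $t>0$, $0$ otherwise; $F(z-w)$ is evaluated with this formula at $z-w$. $h(x,t)=F(x-\gamma,t)$, $h_*(x,t)=(\pi/t)^{N/2}e^{|x-\gamma|^2/(4t)}$ on $\mathbb{R}^{N+1}_+$; $\tilde h(x,t)=e^{\langle x,\gamma\rangle+|\gamma|^2t}$, $\tilde h_*(y,\tau)=e^{-\langle y,\gamma\rangle-|\gamma|^2\tau}$ on $\mathbb{R}^{N+1}_-$. Appell map $A(x,t)=(\frac{x}{2t},-\frac{1}{4t})$, $A^{-1}(x,t)=(-\frac{x}{2t},-\frac{1}{4t})$. For compact $K$ (in $\mathbb{R}^{N+1}_+$ or $\mathbb{R}^{N+1}_-$), $\mathcal{M}_K$ is the set of nonnegative Radon measures supported in $K$. $\mathbb{P}^h_\mu(z)=\int\frac{F(z-w)}{h(z)h_*(w)}d\mu(w)$ ($z\in\mathbb{R}^{N+1}_+$), $\mathbb{P}^{\tilde h}_\mu(z)=\int\frac{F(z-w)}{\tilde h(z)\tilde h_*(w)}d\mu(w)$ ($z\in\mathbb{R}^{N+1}_-$). $C_h(K)=\max\{\mu(K):\mu\in\mathcal{M}_K,\mathbb{P}^h_\mu\le1\text{ on }\mathbb{R}^{N+1}_+\}$ and $C_{\tilde h}(K)=\max\{\mu(K):\mu\in\mathcal{M}_K,\mathbb{P}^{\tilde h}_\mu\le1\text{ on }\mathbb{R}^{N+1}_-\}$; an $h$-capacitary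 ($\tilde h$-capacitary) measure of $K$ is a measure attaining this maximum. *)

theory Defs
  imports "HOL-Analysis.Analysis" "HOL-Probability.Probability"
begin

text \<open>Points of R^(N+1) are pairs (x,t) with x in a Euclidean space of dimension N = DIM('a)
  and t real.\<close>

definition upper :: "('a::euclidean_space \<times> real) set" where
  "upper = {p. snd p > 0}"

definition lower :: "('a::euclidean_space \<times> real) set" where
  "lower = {p. snd p < 0}"

definition heatF :: "('a::euclidean_space \<times> real) \<Rightarrow> real" where
  "heatF p = (if snd p > 0
      then (4 * pi * snd p) powr (- real DIM('a) / 2) * exp (- (norm (fst p))\<^sup>2 / (4 * snd p))
      else 0)"

definition hfun :: "'a::euclidean_space \<Rightarrow> ('a \<times> real) \<Rightarrow> real" where
  "hfun \<gamma> p = heatF (fst p - \<gamma>, snd p)"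

definition hstar :: "'a::euclidean_space \<Rightarrow> ('a \<times> real) \<Rightarrow> real" where
  "hstar \<gamma> p = (pi / snd p) powr (real DIM('a) / 2) * exp ((norm (fst p - \<gamma>))\<^sup>2 / (4 * snd p))"

definition htil :: "'a::euclidean_space \<Rightarrow> ('a \<times> real) \<Rightarrow> real" where
  "htil \<gamma> p = exp (inner (fst p) \<gamma> + (norm \<gamma>)\<^sup>2 * snd p)"

definition htilstar :: "'a::euclidean_space \<Rightarrow> ('a \<times> real) \<Rightarrow> real" where
  "htilstar \<gamma> p = exp (- inner (fst p) \<gamma> - (norm \<gamma>)\<^sup>2 * snd p)"

definition appell :: "('a::euclidean_space \<times> real) \<Rightarrow> ('a \<times> real)" where
  "appell p = ((1 / (2 * snd p)) *\<^sub>R fst p, - 1 / (4 * snd p))"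

definition appell_inv :: "('a::euclidean_space \<times> real) \<Rightarrow> ('a \<times> real)" where
  "appell_inv p = ((- 1 / (2 * snd p)) *\<^sub>R fst p, - 1 / (4 * snd p))"

text \<open>M_K: nonnegative (finite, hence Radon) Borel measures supported in K.\<close>
definition meas_on :: "('a::euclidean_space \<times> real) set \<Rightarrow> ('a \<times> real) measure set" where
  "meas_on K = {\<mu>. sets \<mu> = sets borel \<and> emeasure \<mu> (UNIV - K) = 0 \<and> emeasure \<mu> K < \<infinity>}"

definition Ph :: "'a::euclidean_space \<Rightarrow> ('a \<times> real) measure \<Rightarrow> ('a \<times> real) \<Rightarrow> ennreal" where
  "Ph \<gamma> \<mu> z = (\<integral>\<^sup>+ w. ennreal (heatF (z - w) / (hfun \<gamma> z * hstar \<gamma> w)) \<partial>\<mu>)"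

definition Phtil :: "'a::euclidean_space \<Rightarrow> ('a \<times> real) measure \<Rightarrow> ('a \<times> real) \<Rightarrow> ennreal" where
  "Phtil \<gamma> \<mu> z = (\<integral>\<^sup>+ w. ennreal (heatF (z - w) / (htil \<gamma> z * htilstar \<gamma> w)) \<partial>\<mu>)"

definition adm_h :: "'a::euclidean_space \<Rightarrow> ('a \<times> real) set \<Rightarrow> ('a \<times> real) measure set" where
  "adm_h \<gamma> K = {\<mu> \<in> meas_on K. \<forall>z \<in> upper. Ph \<gamma> \<mu> z \<le> 1}"

definition adm_htil :: "'a::euclidean_space \<Rightarrow> ('a \<times> real) set \<Rightarrow> ('a \<times> real) measure set" where
  "adm_htil \<gamma> K = {\<mu> \<in> meas_on K. \<forall>z \<in> lower. Phtil \<gamma> \<mu> z \<le> 1}"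

definition cap_h :: "'a::euclidean_space \<Rightarrow> ('a \<times> real) set \<Rightarrow> ennreal" where
  "cap_h \<gamma> K = (SUP \<mu> \<in> adm_h \<gamma> K. emeasure \<mu> K)"

definition cap_htil :: "'a::euclidean_space \<Rightarrow> ('a \<times> real) set \<Rightarrow> ennreal" where
  "cap_htil \<gamma> K = (SUP \<mu> \<in> adm_htil \<gamma> K. emeasure \<mu> K)"

definition is_hcap :: "'a::euclidean_space \<Rightarrow> ('a \<times> real) set \<Rightarrow> ('a \<times> real) measure \<Rightarrow> bool" where
  "is_hcap \<gamma> K lam \<longleftrightarrow> lam \<in> adm_h \<gamma> K \<and> (\<forall>\<mu> \<in> adm_h \<gamma> K. emeasure \<mu> K \<le> emeasure lam K)"

definition is_htilcap :: "'a::euclidean_space \<Rightarrow> ('a \<times> real) set \<Rightarrow> ('a \<times> real) measure \<Rightarrow> bool" where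
  "is_htilcap \<gamma> K lam \<longleftrightarrow> lam \<in> adm_htil \<gamma> K \<and> (\<forall>\<mu> \<in> adm_htil \<gamma> K. emeasure \<mu> K \<le> emeasure lam K)"

end

theory Submission
  imports Defs
begin

(* Write z = (x,t) with t < 0 and w = (y,tau) with tau > 0, and put D = 1 + 4 t tau. The heat
   kernels F(A^-1 z - w) and F(z - A w) have time arguments -D/(4t) and D/(4tau), so they vanish
   together; when D > 0 the Gaussian exponents of the two normalised kernels coincide after
   expanding the squares, and so do the prefactors, because (s - tau)/s = D for s = -1/(4t).
   Hence pushing a measure on K forward along A turns the h-potential into the h~-potential,
   preserves the mass of K, and maps admissible measures to admissible measures, with A^-1
   pushing them back. Capacities and capacitary measures therefore correspond. *)

lemma appell_inv_appell: "snd p \<noteq> 0 \<Longrightarrow> appell_inv (appell p) = p"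
  by (cases p) (simp add: appell_def appell_inv_def field_simps)

lemma appell_appell_inv: "snd p \<noteq> 0 \<Longrightarrow> appell (appell_inv p) = p"
  by (cases p) (simp add: appell_def appell_inv_def field_simps)

lemma appell_in_lower: "p \<in> upper \<Longrightarrow> appell p \<in> lower"
  by (cases p) (simp add: appell_def upper_def lower_def divide_neg_pos)

lemma appell_inv_in_upper: "p \<in> lower \<Longrightarrow> appell_inv p \<in> upper"
  by (cases p) (simp add: appell_inv_def upper_def lower_def divide_neg_neg)

lemma appell_image_subset_lower: "K \<subseteq> upper \<Longrightarrow> appell ` K \<subseteq> lower"
  using appell_in_lower by blast

lemma appell_inv_image_subset_upper: "K \<subseteq> lower \<Longrightarrow> appell_inv ` K \<subseteq> upper"
  using appell_inv_in_upper by blast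

lemma appell_inv_image_appell: "K \<subseteq> upper \<Longrightarrow> appell_inv ` appell ` K = K"
  by (force simp: image_image upper_def appell_inv_appell)

lemma appell_image_appell_inv: "K \<subseteq> lower \<Longrightarrow> appell ` appell_inv ` K = K"
  by (force simp: image_image lower_def appell_appell_inv)

lemma continuous_on_appell: "continuous_on upper (appell :: 'a::euclidean_space \<times> real \<Rightarrow> _)"
  unfolding appell_def upper_def by (intro continuous_intros) auto

lemma continuous_on_appell_inv: "continuous_on lower (appell_inv :: 'a::euclidean_space \<times> real \<Rightarrow> _)"
  unfolding appell_inv_def lower_def by (intro continuous_intros) auto

lemma compact_appell_image: "compact K \<Longrightarrow> K \<subseteq> upper \<Longrightarrow> compact (appell ` K)"
  by (rule compact_continuous_image[OF continuous_on_subset[OF continuous_on_appell]])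

lemma compact_appell_inv_image: "compact K \<Longrightarrow> K \<subseteq> lower \<Longrightarrow> compact (appell_inv ` K)"
  by (rule compact_continuous_image[OF continuous_on_subset[OF continuous_on_appell_inv]])

lemma borel_measurable_appell: "appell \<in> borel_measurable (borel :: ('a::euclidean_space \<times> real) measure)"
proof -
  have "appell \<in> (borel \<Otimes>\<^sub>M borel :: ('a \<times> real) measure) \<rightarrow>\<^sub>M borel \<Otimes>\<^sub>M borel"
    unfolding appell_def by measurable
  then show ?thesis by (simp add: borel_prod)
qed

lemma borel_measurable_appell_inv: "appell_inv \<in> borel_measurable (borel :: ('a::euclidean_space \<times> real) measure)"
proof -
  have "appell_inv \<in> (borel \<Otimes>\<^sub>M borel :: ('a \<times> real) measure) \<rightarrow>\<^sub>M borel \<Otimes>\<^sub>M borel"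
    unfolding appell_inv_def by measurable
  then show ?thesis by (simp add: borel_prod)
qed

lemma appell_exponent_identity:
  fixes x y \<gamma> :: "'a::real_inner" and t \<tau> :: real
  assumes t: "t \<noteq> 0" and \<tau>: "\<tau> \<noteq> 0" and nz: "1 + 4*t*\<tau> \<noteq> 0"
  shows "- (norm ((-1/(2*t)) *\<^sub>R x - y))\<^sup>2 / (4*(-1/(4*t) - \<tau>))
           - (- (norm ((-1/(2*t)) *\<^sub>R x - \<gamma>))\<^sup>2 / (4*(-1/(4*t)))) - (norm (y - \<gamma>))\<^sup>2 / (4*\<tau>)
       = - (norm (x - (1/(2*\<tau>)) *\<^sub>R y))\<^sup>2 / (4*(t + 1/(4*\<tau>)))
           - (inner x \<gamma> + (norm \<gamma>)\<^sup>2 * t) - (- inner ((1/(2*\<tau>)) *\<^sub>R y) \<gamma> - (norm \<gamma>)\<^sup>2 * (-1/(4*\<tau>)))"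
proof -
  define D where "D = 1 + 4*t*\<tau>"
  have e1: "4*(-1/(4*t) - \<tau>) = - D / t" and e2: "4*(t + 1/(4*\<tau>)) = D / \<tau>"
    and e3: "4*(-1/(4*t)) = -1/t"
    using t \<tau> by (simp_all add: D_def field_simps)
  have "D \<noteq> 0" using nz by (simp add: D_def)
  then show ?thesis
    unfolding e1 e2 e3 power2_norm_eq_inner
    using t \<tau>
    by (simp add: inner_diff_left inner_diff_right inner_commute;
        simp add: field_simps; simp add: D_def algebra_simps)
qed

lemma powr_neg_ratio:
  fixes a b c r :: real
  assumes "a > 0" "b > 0" "c > 0"
  shows "a powr (-r) / (b powr (-r) * c powr r) = (a * c / b) powr (-r)"
  using assms by (simp add: powr_minus powr_mult powr_divide divide_inverse inverse_powr)

lemma appell_prefactor_identity: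
  fixes t \<tau> r :: real
  assumes t: "t < 0" and \<tau>: "\<tau> > 0" and D: "1 + 4*t*\<tau> > 0"
  shows "(4*pi*(-1/(4*t) - \<tau>)) powr (-r) / ((4*pi*(-1/(4*t))) powr (-r) * (pi/\<tau>) powr r)
       = (4*pi*(t + 1/(4*\<tau>))) powr (-r)"
proof -
  have "-1/(4*t) - \<tau> > 0" "-1/(4*t) > 0" using t \<tau> D by (auto simp: field_simps)
  then have "(4*pi*(-1/(4*t) - \<tau>)) powr (-r) / ((4*pi*(-1/(4*t))) powr (-r) * (pi/\<tau>) powr r)
      = ((4*pi*(-1/(4*t) - \<tau>)) * (pi/\<tau>) / (4*pi*(-1/(4*t)))) powr (-r)"
    using \<tau> by (intro powr_neg_ratio) (auto simp: divide_pos_neg)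
  also have "(4*pi*(-1/(4*t) - \<tau>)) * (pi/\<tau>) / (4*pi*(-1/(4*t))) = 4*pi*(t + 1/(4*\<tau>))"
    using t \<tau> by (simp add: field_simps)
  finally show ?thesis .
qed

lemma divide_mult_exp:
  fixes P1 P2 P3 a b c :: real
  assumes "P2 \<noteq> 0" "P3 \<noteq> 0"
  shows "(P1 * exp a) / ((P2 * exp b) * (P3 * exp c)) = P1 / (P2 * P3) * exp (a - b - c)"
  using assms by (simp add: exp_diff)

lemma Ph_kernel_appell_inv_explicit:
  fixes \<gamma> x y :: "'a::euclidean_space"
  assumes t: "t < 0" and \<tau>: "\<tau> > 0" and s: "-1/(4*t) - \<tau> > 0"
  shows "heatF (appell_inv (x, t) - (y, \<tau>)) / (hfun \<gamma> (appell_inv (x, t)) * hstar \<gamma> (y, \<tau>))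
       = (4*pi*(-1/(4*t) - \<tau>)) powr (- (real DIM('a) / 2))
           / ((4*pi*(-1/(4*t))) powr (- (real DIM('a) / 2)) * (pi/\<tau>) powr (real DIM('a) / 2))
         * exp (- (norm ((-1/(2*t)) *\<^sub>R x - y))\<^sup>2 / (4*(-1/(4*t) - \<tau>))
           - (- (norm ((-1/(2*t)) *\<^sub>R x - \<gamma>))\<^sup>2 / (4*(-1/(4*t)))) - (norm (y - \<gamma>))\<^sup>2 / (4*\<tau>))"
proof -
  let ?d = "real DIM('a) / 2"
  have "-1/(4*t) > 0" using t by (simp add: divide_neg_pos)
  then have "heatF (appell_inv (x, t) - (y, \<tau>)) / (hfun \<gamma> (appell_inv (x, t)) * hstar \<gamma> (y, \<tau>))
      = ((4*pi*(-1/(4*t) - \<tau>)) powr (- ?d) * exp (- (norm ((-1/(2*t)) *\<^sub>R x - y))\<^sup>2 / (4*(-1/(4*t) - \<tau>))))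
        / (((4*pi*(-1/(4*t))) powr (- ?d) * exp (- (norm ((-1/(2*t)) *\<^sub>R x - \<gamma>))\<^sup>2 / (4*(-1/(4*t)))))
           * ((pi/\<tau>) powr ?d * exp ((norm (y - \<gamma>))\<^sup>2 / (4*\<tau>))))"
    using s by (simp add: appell_inv_def heatF_def hfun_def hstar_def)
  also have "\<dots> = (4*pi*(-1/(4*t) - \<tau>)) powr (- ?d) / ((4*pi*(-1/(4*t))) powr (- ?d) * (pi/\<tau>) powr ?d)
         * exp (- (norm ((-1/(2*t)) *\<^sub>R x - y))\<^sup>2 / (4*(-1/(4*t) - \<tau>))
           - (- (norm ((-1/(2*t)) *\<^sub>R x - \<gamma>))\<^sup>2 / (4*(-1/(4*t)))) - (norm (y - \<gamma>))\<^sup>2 / (4*\<tau>))"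
    using \<open>-1/(4*t) > 0\<close> \<tau> by (intro divide_mult_exp) auto
  finally show ?thesis .
qed

lemma Phtil_kernel_appell_explicit:
  fixes \<gamma> x y :: "'a::euclidean_space"
  assumes s: "t + 1/(4*\<tau>) > 0"
  shows "heatF ((x, t) - appell (y, \<tau>)) / (htil \<gamma> (x, t) * htilstar \<gamma> (appell (y, \<tau>)))
       = (4*pi*(t + 1/(4*\<tau>))) powr (- (real DIM('a) / 2))
         * exp (- (norm (x - (1/(2*\<tau>)) *\<^sub>R y))\<^sup>2 / (4*(t + 1/(4*\<tau>)))
           - (inner x \<gamma> + (norm \<gamma>)\<^sup>2 * t) - (- inner ((1/(2*\<tau>)) *\<^sub>R y) \<gamma> - (norm \<gamma>)\<^sup>2 * (-1/(4*\<tau>))))"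
  using s by (simp add: appell_def heatF_def htil_def htilstar_def exp_diff)

lemma Ph_kernel_appell_inv_eq_Phtil_kernel:
  fixes \<gamma> :: "'a::euclidean_space"
  assumes z: "z \<in> lower" and w: "w \<in> upper"
  shows "heatF (appell_inv z - w) / (hfun \<gamma> (appell_inv z) * hstar \<gamma> w)
       = heatF (z - appell w) / (htil \<gamma> z * htilstar \<gamma> (appell w))"
proof -
  obtain x t y \<tau> where zw: "z = (x, t)" "w = (y, \<tau>)" and t: "t < 0" and \<tau>: "\<tau> > 0"
    using z w by (cases z, cases w) (auto simp: lower_def upper_def)
  have "-1/(4*t) - \<tau> = (1 + 4*t*\<tau>) / (-4*t)" "t + 1/(4*\<tau>) = (1 + 4*t*\<tau>) / (4*\<tau>)"
    using t \<tau> by (simp_all add: field_simps)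
  then have times: "-1/(4*t) - \<tau> > 0 \<longleftrightarrow> 1 + 4*t*\<tau> > 0" "t + 1/(4*\<tau>) > 0 \<longleftrightarrow> 1 + 4*t*\<tau> > 0"
    using t \<tau> by (simp_all add: zero_less_divide_iff divide_less_0_iff)
  show ?thesis
  proof (cases "1 + 4*t*\<tau> > 0")
    case False
    then show ?thesis using times by (simp add: zw appell_def appell_inv_def heatF_def)
  next
    case True
    have nz: "t \<noteq> 0" "\<tau> \<noteq> 0" "1 + 4*t*\<tau> \<noteq> 0" using t \<tau> True by auto
    show ?thesis
      using True times
      by (simp only: zw Ph_kernel_appell_inv_explicit[OF t \<tau>] Phtil_kernel_appell_explicit
          appell_prefactor_identity[OF t \<tau> True] appell_exponent_identity[OF nz])
  qed
qed

lemma Phtil_kernel_appell_eq_Ph_kernel: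
  fixes \<gamma> :: "'a::euclidean_space"
  assumes z: "z \<in> upper" and w: "w \<in> lower"
  shows "heatF (appell z - w) / (htil \<gamma> (appell z) * htilstar \<gamma> w)
       = heatF (z - appell_inv w) / (hfun \<gamma> z * hstar \<gamma> (appell_inv w))"
  using Ph_kernel_appell_inv_eq_Phtil_kernel[OF appell_in_lower[OF z] appell_inv_in_upper[OF w], of \<gamma>] z w
  by (simp add: upper_def lower_def appell_inv_appell appell_appell_inv)

lemma borel_measurable_Ph_kernel:
  "(\<lambda>w. ennreal (heatF (z - w) / (hfun \<gamma> z * hstar \<gamma> w)))
     \<in> borel_measurable (borel :: ('a::euclidean_space \<times> real) measure)"
proof -
  have "(\<lambda>w. ennreal (heatF (z - w) / (hfun \<gamma> z * hstar \<gamma> w)))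
      \<in> borel_measurable (borel \<Otimes>\<^sub>M borel :: ('a \<times> real) measure)"
    unfolding heatF_def hstar_def fst_diff snd_diff by measurable
  then show ?thesis by (simp add: borel_prod)
qed

lemma borel_measurable_Phtil_kernel:
  "(\<lambda>w. ennreal (heatF (z - w) / (htil \<gamma> z * htilstar \<gamma> w)))
     \<in> borel_measurable (borel :: ('a::euclidean_space \<times> real) measure)"
proof -
  have "(\<lambda>w. ennreal (heatF (z - w) / (htil \<gamma> z * htilstar \<gamma> w)))
      \<in> borel_measurable (borel \<Otimes>\<^sub>M borel :: ('a \<times> real) measure)"
    unfolding heatF_def htilstar_def fst_diff snd_diff by measurable
  then show ?thesis by (simp add: borel_prod)
qed

lemma meas_on_iff_AE:
  assumes "K \<in> sets borel"
  shows "\<mu> \<in> meas_on K \<longleftrightarrow>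
           sets \<mu> = sets borel \<and> (AE w in \<mu>. w \<in> K) \<and> emeasure \<mu> K < \<infinity>"
proof -
  have "(AE w in \<mu>. w \<in> K) \<longleftrightarrow> emeasure \<mu> (UNIV - K) = 0" if "sets \<mu> = sets borel"
    using that assms sets_eq_imp_space_eq[OF that]
    by (intro AE_iff_measurable) auto
  then show ?thesis by (auto simp: meas_on_def)
qed

lemma emeasure_distr_image:
  assumes K: "K \<in> sets borel" "f ` K \<in> sets borel" and f: "f \<in> borel_measurable borel"
    and \<mu>: "\<mu> \<in> meas_on K"
  shows "emeasure (distr \<mu> borel f) (f ` K) = emeasure \<mu> K"
proof -
  have sets: "sets \<mu> = sets borel" and AE: "AE w in \<mu>. w \<in> K"
    using \<mu> by (auto simp: meas_on_iff_AE[OF K(1)])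
  have fm: "f \<in> measurable \<mu> borel" using f by (simp add: measurable_cong_sets[OF sets refl])
  have "emeasure (distr \<mu> borel f) (f ` K) = emeasure \<mu> (f -` f ` K)"
    using K(2) sets_eq_imp_space_eq[OF sets] by (simp add: emeasure_distr[OF fm])
  also have "\<dots> = emeasure \<mu> K"
    using AE K sets measurable_sets[OF fm K(2)] sets_eq_imp_space_eq[OF sets]
    by (intro emeasure_eq_AE) auto
  finally show ?thesis .
qed

lemma meas_on_distr_image:
  assumes K: "K \<in> sets borel" "f ` K \<in> sets borel" and f: "f \<in> borel_measurable borel"
    and \<mu>: "\<mu> \<in> meas_on K"
  shows "distr \<mu> borel f \<in> meas_on (f ` K)"
proof -
  have sets: "sets \<mu> = sets borel" and AE: "AE w in \<mu>. w \<in> K" and fin: "emeasure \<mu> K < \<infinity>"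
    using \<mu> by (auto simp: meas_on_iff_AE[OF K(1)])
  have "AE v in distr \<mu> borel f. v \<in> f ` K"
    using AE K(2) f by (subst AE_distr_iff) (auto simp: measurable_cong_sets[OF sets refl])
  then show ?thesis
    using fin emeasure_distr_image[OF K f \<mu>] by (simp add: meas_on_iff_AE[OF K(2)])
qed

lemma nn_integral_distr_meas_on:
  assumes K: "K \<in> sets borel" and \<mu>: "\<mu> \<in> meas_on K"
    and f: "f \<in> borel_measurable borel" and g: "g \<in> borel_measurable borel"
    and k: "\<And>w. w \<in> K \<Longrightarrow> k w = g (f w)"
  shows "(\<integral>\<^sup>+ w. k w \<partial>\<mu>) = (\<integral>\<^sup>+ v. g v \<partial>distr \<mu> borel f)"
proof -
  have sets: "sets \<mu> = sets borel" and AE: "AE w in \<mu>. w \<in> K"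
    using \<mu> by (auto simp: meas_on_iff_AE[OF K])
  have "(\<integral>\<^sup>+ w. k w \<partial>\<mu>) = (\<integral>\<^sup>+ w. g (f w) \<partial>\<mu>)"
    using AE k by (intro nn_integral_cong_AE) auto
  also have "\<dots> = (\<integral>\<^sup>+ v. g v \<partial>distr \<mu> borel f)"
    using f g by (intro nn_integral_distr[symmetric]) (auto simp: measurable_cong_sets[OF sets refl])
  finally show ?thesis .
qed

lemma distr_distr_meas_on_inverse:
  assumes K: "K \<in> sets borel" and \<mu>: "\<mu> \<in> meas_on K"
    and f: "f \<in> borel_measurable borel" and g: "g \<in> borel_measurable borel"
    and gf: "\<And>w. w \<in> K \<Longrightarrow> g (f w) = w"
  shows "distr (distr \<mu> borel f) borel g = \<mu>"
proof -
  have sets: "sets \<mu> = sets borel" and AE: "AE w in \<mu>. w \<in> K"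
    using \<mu> by (auto simp: meas_on_iff_AE[OF K])
  have fm: "f \<in> measurable \<mu> borel" using f by (simp add: measurable_cong_sets[OF sets refl])
  have "distr (distr \<mu> borel f) borel g = distr \<mu> borel (g \<circ> f)"
    using g fm by (rule distr_distr)
  also have "\<dots> = distr \<mu> \<mu> (\<lambda>w. w)"
    using AE gf fm g sets by (intro distr_cong_AE) (auto simp: measurable_cong_sets[OF sets refl])
  finally show ?thesis by simp
qed

lemma Ph_appell_inv:
  fixes \<gamma> :: "'a::euclidean_space"
  assumes K: "K \<in> sets borel" "K \<subseteq> upper" and \<mu>: "\<mu> \<in> meas_on K" and z: "z \<in> lower"
  shows "Ph \<gamma> \<mu> (appell_inv z) = Phtil \<gamma> (distr \<mu> borel appell) z"
  unfolding Ph_def Phtil_def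
  using K Ph_kernel_appell_inv_eq_Phtil_kernel[OF z]
  by (intro nn_integral_distr_meas_on[OF K(1) \<mu> borel_measurable_appell borel_measurable_Phtil_kernel])
     auto

lemma Phtil_appell:
  fixes \<gamma> :: "'a::euclidean_space"
  assumes K: "K \<in> sets borel" "K \<subseteq> lower" and \<mu>: "\<mu> \<in> meas_on K" and z: "z \<in> upper"
  shows "Phtil \<gamma> \<mu> (appell z) = Ph \<gamma> (distr \<mu> borel appell_inv) z"
  unfolding Ph_def Phtil_def
  using K Phtil_kernel_appell_eq_Ph_kernel[OF z]
  by (intro nn_integral_distr_meas_on[OF K(1) \<mu> borel_measurable_appell_inv borel_measurable_Ph_kernel])
     auto

lemma meas_on_distr_appell:
  assumes "compact K" "K \<subseteq> upper" "\<mu> \<in> meas_on K"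
  shows "distr \<mu> borel appell \<in> meas_on (appell ` K)"
  using assms compact_appell_image[OF assms(1,2)]
  by (intro meas_on_distr_image[OF _ _ borel_measurable_appell]) (auto intro: borel_compact)

lemma meas_on_distr_appell_inv:
  assumes "compact K" "K \<subseteq> lower" "\<mu> \<in> meas_on K"
  shows "distr \<mu> borel appell_inv \<in> meas_on (appell_inv ` K)"
  using assms compact_appell_inv_image[OF assms(1,2)]
  by (intro meas_on_distr_image[OF _ _ borel_measurable_appell_inv]) (auto intro: borel_compact)

lemma emeasure_distr_appell:
  assumes "compact K" "K \<subseteq> upper" "\<mu> \<in> meas_on K"
  shows "emeasure (distr \<mu> borel appell) (appell ` K) = emeasure \<mu> K"
  using assms compact_appell_image[OF assms(1,2)]
  by (intro emeasure_distr_image[OF _ _ borel_measurable_appell]) (auto intro: borel_compact)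

lemma emeasure_distr_appell_inv:
  assumes "compact K" "K \<subseteq> lower" "\<mu> \<in> meas_on K"
  shows "emeasure (distr \<mu> borel appell_inv) (appell_inv ` K) = emeasure \<mu> K"
  using assms compact_appell_inv_image[OF assms(1,2)]
  by (intro emeasure_distr_image[OF _ _ borel_measurable_appell_inv]) (auto intro: borel_compact)

lemma distr_appell_inv_distr_appell:
  assumes "compact K" "K \<subseteq> upper" "\<mu> \<in> meas_on K"
  shows "distr (distr \<mu> borel appell) borel appell_inv = \<mu>"
proof -
  have "appell_inv (appell w) = w" if "w \<in> K" for w
    using that assms(2) by (intro appell_inv_appell) (auto simp: upper_def)
  then show ?thesis
    using assms
    by (intro distr_distr_meas_on_inverse[OF _ _ borel_measurable_appell borel_measurable_appell_inv])
       (auto intro: borel_compact)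
qed

lemma distr_appell_adm_htil:
  fixes \<gamma> :: "'a::euclidean_space"
  assumes K: "compact K" "K \<subseteq> upper" and \<mu>: "\<mu> \<in> adm_h \<gamma> K"
  shows "distr \<mu> borel appell \<in> adm_htil \<gamma> (appell ` K)"
proof -
  have m: "\<mu> \<in> meas_on K" and le: "\<forall>z\<in>upper. Ph \<gamma> \<mu> z \<le> 1"
    using \<mu> by (auto simp: adm_h_def)
  have "Phtil \<gamma> (distr \<mu> borel appell) z \<le> 1" if "z \<in> lower" for z
    using le appell_inv_in_upper[OF that]
    by (simp flip: Ph_appell_inv[OF borel_compact[OF K(1)] K(2) m that])
  then show ?thesis using meas_on_distr_appell[OF K m] by (simp add: adm_htil_def)
qed

lemma distr_appell_inv_adm_h:
  fixes \<gamma> :: "'a::euclidean_space"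
  assumes K: "compact K" "K \<subseteq> lower" and \<mu>: "\<mu> \<in> adm_htil \<gamma> K"
  shows "distr \<mu> borel appell_inv \<in> adm_h \<gamma> (appell_inv ` K)"
proof -
  have m: "\<mu> \<in> meas_on K" and le: "\<forall>z\<in>lower. Phtil \<gamma> \<mu> z \<le> 1"
    using \<mu> by (auto simp: adm_htil_def)
  have "Ph \<gamma> (distr \<mu> borel appell_inv) z \<le> 1" if "z \<in> upper" for z
    using le appell_in_lower[OF that]
    by (simp flip: Phtil_appell[OF borel_compact[OF K(1)] K(2) m that])
  then show ?thesis using meas_on_distr_appell_inv[OF K m] by (simp add: adm_h_def)
qed

lemma adm_h_iff_distr_appell_adm_htil:
  fixes \<gamma> :: "'a::euclidean_space"
  assumes K: "compact K" "K \<subseteq> upper" and \<mu>: "\<mu> \<in> meas_on K"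
  shows "\<mu> \<in> adm_h \<gamma> K \<longleftrightarrow> distr \<mu> borel appell \<in> adm_htil \<gamma> (appell ` K)"
proof
  assume "distr \<mu> borel appell \<in> adm_htil \<gamma> (appell ` K)"
  from distr_appell_inv_adm_h[OF compact_appell_image[OF K] appell_image_subset_lower[OF K(2)] this]
  show "\<mu> \<in> adm_h \<gamma> K"
    by (simp add: distr_appell_inv_distr_appell[OF K \<mu>] appell_inv_image_appell[OF K(2)])
qed (rule distr_appell_adm_htil[OF K])

lemma cap_h_eq_emeasure: "is_hcap \<gamma> K lam \<Longrightarrow> cap_h \<gamma> K = emeasure lam K"
  unfolding is_hcap_def cap_h_def by (auto intro!: antisym SUP_least SUP_upper)

lemma cap_htil_eq_emeasure: "is_htilcap \<gamma> K lam \<Longrightarrow> cap_htil \<gamma> K = emeasure lam K"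
  unfolding is_htilcap_def cap_htil_def by (auto intro!: antisym SUP_least SUP_upper)

lemma masses_adm_htil_appell_image:
  fixes \<gamma> :: "'a::euclidean_space"
  assumes K: "compact K" "K \<subseteq> upper"
  shows "(\<lambda>\<nu>. emeasure \<nu> (appell ` K)) ` adm_htil \<gamma> (appell ` K) = (\<lambda>\<mu>. emeasure \<mu> K) ` adm_h \<gamma> K"
proof -
  have AK: "compact (appell ` K)" "appell ` K \<subseteq> lower"
    using compact_appell_image[OF K] appell_image_subset_lower[OF K(2)] by auto
  have "emeasure \<nu> (appell ` K) \<in> (\<lambda>\<mu>. emeasure \<mu> K) ` adm_h \<gamma> K"
    if \<nu>: "\<nu> \<in> adm_htil \<gamma> (appell ` K)" for \<nu>
  proof (rule image_eqI)
    show "distr \<nu> borel appell_inv \<in> adm_h \<gamma> K"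
      using distr_appell_inv_adm_h[OF AK \<nu>] by (simp add: appell_inv_image_appell[OF K(2)])
    show "emeasure \<nu> (appell ` K) = emeasure (distr \<nu> borel appell_inv) K"
      using \<nu> emeasure_distr_appell_inv[OF AK, of \<nu>]
      by (simp add: adm_htil_def appell_inv_image_appell[OF K(2)])
  qed
  moreover have "emeasure \<mu> K \<in> (\<lambda>\<nu>. emeasure \<nu> (appell ` K)) ` adm_htil \<gamma> (appell ` K)"
    if \<mu>: "\<mu> \<in> adm_h \<gamma> K" for \<mu>
  proof (rule image_eqI)
    show "distr \<mu> borel appell \<in> adm_htil \<gamma> (appell ` K)" by (rule distr_appell_adm_htil[OF K \<mu>])
    show "emeasure \<mu> K = emeasure (distr \<mu> borel appell) (appell ` K)"
      using \<mu> emeasure_distr_appell[OF K, of \<mu>] by (simp add: adm_h_def)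
  qed
  ultimately show ?thesis by blast
qed

lemma cap_htil_appell_image: "compact K \<Longrightarrow> K \<subseteq> upper \<Longrightarrow> cap_htil \<gamma> (appell ` K) = cap_h \<gamma> K"
  by (simp add: cap_htil_def cap_h_def masses_adm_htil_appell_image)

lemma is_hcap_iff_is_htilcap_distr_appell:
  fixes \<gamma> :: "'a::euclidean_space"
  assumes K: "compact K" "K \<subseteq> upper" and lam: "lam \<in> meas_on K"
  shows "is_hcap \<gamma> K lam \<longleftrightarrow> is_htilcap \<gamma> (appell ` K) (distr lam borel appell)"
proof -
  let ?c = "emeasure lam K"
  have "(\<forall>\<nu>\<in>adm_htil \<gamma> (appell ` K). emeasure \<nu> (appell ` K) \<le> ?c)
      \<longleftrightarrow> (\<forall>x\<in>(\<lambda>\<nu>. emeasure \<nu> (appell ` K)) ` adm_htil \<gamma> (appell ` K). x \<le> ?c)"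
    by blast
  also have "\<dots> \<longleftrightarrow> (\<forall>\<mu>\<in>adm_h \<gamma> K. emeasure \<mu> K \<le> ?c)"
    unfolding masses_adm_htil_appell_image[OF K] by blast
  finally show ?thesis
    by (simp add: is_hcap_def is_htilcap_def adm_h_iff_distr_appell_adm_htil[OF K lam]
        emeasure_distr_appell[OF K lam])
qed

theorem lemma4p2:
  fixes \<gamma> :: "'a::euclidean_space"
  shows
    "(\<forall>K \<mu>. compact K \<and> K \<subseteq> (upper :: ('a \<times> real) set) \<and> \<mu> \<in> meas_on K \<longrightarrow>
        distr \<mu> borel appell \<in> meas_on (appell ` K) \<and>
        (\<forall>z \<in> lower. Ph \<gamma> \<mu> (appell_inv z) = Phtil \<gamma> (distr \<mu> borel appell) z))
   \<and> (\<forall>K \<mu>. compact K \<and> K \<subseteq> (lower :: ('a \<times> real) set) \<and> \<mu> \<in> meas_on K \<longrightarrow>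
        distr \<mu> borel appell_inv \<in> meas_on (appell_inv ` K) \<and>
        (\<forall>z \<in> upper. Phtil \<gamma> \<mu> (appell z) = Ph \<gamma> (distr \<mu> borel appell_inv) z))
   \<and> (\<forall>K lam. compact K \<and> K \<subseteq> (upper :: ('a \<times> real) set) \<and> lam \<in> meas_on K \<longrightarrow>
        (is_hcap \<gamma> K lam \<longleftrightarrow> is_htilcap \<gamma> (appell ` K) (distr lam borel appell)))
   \<and> (\<forall>K lam. compact K \<and> K \<subseteq> (upper :: ('a \<times> real) set) \<and> is_hcap \<gamma> K lam \<longrightarrow>
        cap_htil \<gamma> (appell ` K) = emeasure lam K \<and> emeasure lam K = cap_h \<gamma> K)
   \<and> (\<forall>K lam. compact K \<and> K \<subseteq> (lower :: ('a \<times> real) set) \<and> is_htilcap \<gamma> K lam \<longrightarrow>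
        cap_h \<gamma> (appell_inv ` K) = emeasure lam K \<and> emeasure lam K = cap_htil \<gamma> K)"
proof (intro conjI allI impI; elim conjE)
  fix K :: "('a \<times> real) set" and \<mu> assume K: "compact K" "K \<subseteq> upper" and \<mu>: "\<mu> \<in> meas_on K"
  show "distr \<mu> borel appell \<in> meas_on (appell ` K)" by (rule meas_on_distr_appell[OF K \<mu>])
  show "\<forall>z \<in> lower. Ph \<gamma> \<mu> (appell_inv z) = Phtil \<gamma> (distr \<mu> borel appell) z"
    using Ph_appell_inv[OF borel_compact[OF K(1)] K(2) \<mu>] by blast
next
  fix K :: "('a \<times> real) set" and \<mu> assume K: "compact K" "K \<subseteq> lower" and \<mu>: "\<mu> \<in> meas_on K"
  show "distr \<mu> borel appell_inv \<in> meas_on (appell_inv ` K)" by (rule meas_on_distr_appell_inv[OF K \<mu>])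
  show "\<forall>z \<in> upper. Phtil \<gamma> \<mu> (appell z) = Ph \<gamma> (distr \<mu> borel appell_inv) z"
    using Phtil_appell[OF borel_compact[OF K(1)] K(2) \<mu>] by blast
next
  fix K :: "('a \<times> real) set" and lam assume K: "compact K" "K \<subseteq> upper" and lam: "lam \<in> meas_on K"
  show "is_hcap \<gamma> K lam \<longleftrightarrow> is_htilcap \<gamma> (appell ` K) (distr lam borel appell)"
    by (rule is_hcap_iff_is_htilcap_distr_appell[OF K lam])
next
  fix K :: "('a \<times> real) set" and lam assume K: "compact K" "K \<subseteq> upper" and lam: "is_hcap \<gamma> K lam"
  show "cap_htil \<gamma> (appell ` K) = emeasure lam K" "emeasure lam K = cap_h \<gamma> K"
    by (simp_all add: cap_htil_appell_image[OF K] cap_h_eq_emeasure[OF lam])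
next
  fix K :: "('a \<times> real) set" and lam assume K: "compact K" "K \<subseteq> lower" and lam: "is_htilcap \<gamma> K lam"
  have "cap_h \<gamma> (appell_inv ` K) = cap_htil \<gamma> (appell ` appell_inv ` K)"
    using cap_htil_appell_image[OF compact_appell_inv_image[OF K] appell_inv_image_subset_upper[OF K(2)]]
    by simp
  then show "cap_h \<gamma> (appell_inv ` K) = emeasure lam K" "emeasure lam K = cap_htil \<gamma> K"
    by (simp_all add: appell_image_appell_inv[OF K(2)] cap_htil_eq_emeasure[OF lam])
qed

end
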